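(* Let $n\ge1$, $K=U(n)$, $\underline{\lambda}=(\lambda_1\ge\dots\ge\lambda_{n+1})$, $\underline{\mu}=(\mu_1\ge\dots\ge\mu_n)$ with $\lambda_1\ge\mu_1\ge\lambda_2\ge\dots\ge\mu_n\ge\lambda_{n+1}$, $m=m(\underline{\mu})$, and let $\tilde p\in\mathcal{O}_\Lambda$, $V=\bigoplus V_i$-projections $V_i,U_i$ and $L_i$ be as in the context. Then for every $i=1,\dots,m$ there is an isomorphism of $L_i$-representations $$V_i/U_i\cong\begin{cases}\mathbb{C}^{n_i(\underline{\mu})} & \text{if the component labelled }\underline{\mu}_i\text{ is a parallelogram-shape},\\ \{0\}&\text{otherwise},\end{cases}$$ where $\mathbb{C}^{n_i(\underline{\mu})}$ is the standard representation of $U(n_i(\underline{\mu}))=L_i$.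
   Context: Notation: for a finite real sequence $\underline{\tau}$, $[\underline{\tau}]$ is its set of distinct values, $\underline{\tau}_i$ the $i$-th element of $[\underline{\tau}]$ in decreasing order, $m(\underline{\tau})=|[\underline{\tau}]|$, $n_v(\underline{\tau})$ the multiplicity of $v$, $n_i(\underline{\tau})=n_{\underline{\tau}_i}(\underline{\tau})$. Shapes: for each value $v$ in $\underline{\lambda}$ or $\underline{\mu}$, the component labelled $v$ is an M-shape if $n_v(\underline{\mu})=n_v(\underline{\lambda})+1$, a W-shape if $n_v(\underline{\lambda})=n_v(\underline{\mu})+1$, a parallelogram-shape if $n_v(\underline{\lambda})=n_v(\underline{\mu})$. For $\mu\in[\underline{\mu}]$ with M-shape component, $r_\mu>0$ with $r_\mu^2=-\prod_{\lambda\in[\underline{\lambda}],\,\text{W}}(\mu-\lambda)\prod_{\tau\in[\underline{\mu}],\,\text{M},\,\tau\neq\mu}\frac{1}{\mu-\tau}$; otherwise $r_\mu=0$. Setting: $\mathcal{O}_\Lambda$ is the set of $(n+1)\times(n+1)$ Hermitian matrices with eigenvalues $\lambda_1,\dots,\lambda_{n+1}$, with symplectic form $(\omega_\Lambda)_p([X,p],[Y,p])=\frac{1}{\sqrt{-1}}\mathrm{Tr}(p[X,Y])$, $X,Y\in\mathfrak{u}(n+1)$; $K$ acts by conjugation by $\mathrm{diag}(1,k)$. $\mathrm{M}=\mathrm{diag}(\mu_1,\dots,\mu_n)$, $c=\sum\lambda_i-\sum\mu_i$. Split $\mathbb{C}^n=\bigoplus_{i=1}^m\mathbb{C}^{n_i(\underline{\mu})}$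 according to the blocks of equal consecutive $\mu_j$; $\mathbf{v}_i$ denotes the $i$-th block of $\mathbf{v}\in\mathbb{C}^n$. $\tilde p=\begin{pmatrix}c&\mathbf{z}^\dagger\\ \mathbf{z}&\mathrm{M}\end{pmatrix}$ where $\mathbf{z}_i=(r_{\underline{\mu}_i},0,\dots,0)^T$ for each $i$; then $\tilde p\in\mathcal{O}_\Lambda$. Let $T\colon T_{\tilde p}(K\cdot\tilde p)^\omega\to\mathbb{C}^n$ send a tangent vector (which is a Hermitian matrix of the form $\begin{pmatrix}0&\mathbf{v}^\dagger\\ \mathbf{v}&0\end{pmatrix}$) to its lower-left block $\mathbf{v}$; here $T_{\tilde p}(K\cdot\tilde p)^\omega$ is the $\omega_\Lambda$-orthogonal complement of the tangent space of the $K$-orbit. Let $V=T(T_{\tilde p}(K\cdot\tilde p)^\omega)$, $U=T(T_{\tilde p}(K\cdot\tilde p)\cap T_{\tilde p}(K\cdot\tilde p)^\omega)$, and let $V_i,U_i\subset\mathbb{C}^{n_i(\underline{\mu})}$ be the projections of $V,U$ onto the $i$-th block, so $U_i\subseteq V_i$. The isotropy group $K_{\tilde p}$ is the block-diagonal group $L_1\times\dots\times L_m$ with $L_i=\{\mathrm{diag}(1,k):k\in U(n_i(\underline{\mu})-1)\}\le U(n_i(\underline{\mu}))$ if the component labelled $\underline{\mu}_i$ is an M-shape and $L_i=U(n_i(\underline{\mu}))$ otherwise; $L_i$ acts on $\mathbb{C}^{n_i(\underline{\mu})}$ via $L_i\subseteq U(n_i(\underline{\mu}))$, preserving $U_i\subseteq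 V_i$, hence acts on $V_i/U_i$. *)

theory Defs
  imports "HOL-Analysis.Analysis" "Jordan_Normal_Form.Matrix"
begin

text \<open>A finite real sequence of length len is a function nat => real, used on indices below len.\<close>

definition vals :: "(nat \<Rightarrow> real) \<Rightarrow> nat \<Rightarrow> real set" where
  "vals tau len = tau ` {..<len}"

text \<open>Distinct values in decreasing order; the paper's underline-tau_i is (dvals tau len) ! (i-1).\<close>
definition dvals :: "(nat \<Rightarrow> real) \<Rightarrow> nat \<Rightarrow> real list" where
  "dvals tau len = rev (sorted_list_of_set (vals tau len))"

definition mcount :: "(nat \<Rightarrow> real) \<Rightarrow> nat \<Rightarrow> nat" where
  "mcount tau len = length (dvals tau len)"

definition mult :: "(nat \<Rightarrow> real) \<Rightarrow> nat \<Rightarrow> real \<Rightarrow> nat" where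
  "mult tau len v = card {j. j < len \<and> tau j = v}"

definition is_M :: "nat \<Rightarrow> (nat \<Rightarrow> real) \<Rightarrow> (nat \<Rightarrow> real) \<Rightarrow> real \<Rightarrow> bool" where
  "is_M n lam mu v \<longleftrightarrow> mult mu n v = mult lam (n+1) v + 1"

definition is_W :: "nat \<Rightarrow> (nat \<Rightarrow> real) \<Rightarrow> (nat \<Rightarrow> real) \<Rightarrow> real \<Rightarrow> bool" where
  "is_W n lam mu v \<longleftrightarrow> mult lam (n+1) v = mult mu n v + 1"

definition is_P :: "nat \<Rightarrow> (nat \<Rightarrow> real) \<Rightarrow> (nat \<Rightarrow> real) \<Rightarrow> real \<Rightarrow> bool" where
  "is_P n lam mu v \<longleftrightarrow> mult lam (n+1) v = mult mu n v"

definition r_coef :: "nat \<Rightarrow> (nat \<Rightarrow> real) \<Rightarrow> (nat \<Rightarrow> real) \<Rightarrow> real \<Rightarrow> real" where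
  "r_coef n lam mu v =
     (if v \<in> vals mu n \<and> is_M n lam mu v then
        sqrt (- (\<Prod>l\<in>{l\<in>vals lam (n+1). is_W n lam mu l}. (v - l))
               * (\<Prod>t\<in>{t\<in>vals mu n. is_M n lam mu t \<and> t \<noteq> v}. 1 / (v - t)))
      else 0)"

text \<open>Block i (0-based) of C^n: indices j with mu j equal to the i-th largest distinct value;
  size n_i = block_size, starting index block_start.\<close>
definition block_size :: "nat \<Rightarrow> (nat \<Rightarrow> real) \<Rightarrow> nat \<Rightarrow> nat" where
  "block_size n mu i = mult mu n (dvals mu n ! i)"

definition block_start :: "nat \<Rightarrow> (nat \<Rightarrow> real) \<Rightarrow> nat \<Rightarrow> nat" where
  "block_start n mu i = (\<Sum>k<i. block_size n mu k)"

definition block_proj :: "nat \<Rightarrow> (nat \<Rightarrow> real) \<Rightarrow> nat \<Rightarrow> complex vec \<Rightarrow> complex vec" where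
  "block_proj n mu i v = vec (block_size n mu i) (\<lambda>k. v $ (block_start n mu i + k))"

definition adj :: "complex mat \<Rightarrow> complex mat" where
  "adj A = mat (dim_col A) (dim_row A) (\<lambda>(i,j). cnj (A $$ (j,i)))"

definition mtrace :: "complex mat \<Rightarrow> complex" where
  "mtrace A = (\<Sum>i<dim_row A. A $$ (i,i))"

definition unitary_grp :: "nat \<Rightarrow> complex mat set" where
  "unitary_grp d = {g \<in> carrier_mat d d. g * adj g = 1\<^sub>m d}"

definition u_alg :: "nat \<Rightarrow> complex mat set" where
  "u_alg d = {X \<in> carrier_mat d d. adj X = - X}"

text \<open>Lie algebra of K = U(n) embedded as diag(1,k) in U(n+1): matrices diag(0,Y), Y in u(n).\<close>
definition k_alg :: "nat \<Rightarrow> complex mat set" where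
  "k_alg n = {X \<in> u_alg (n+1). \<forall>j\<le>n. X $$ (0,j) = 0 \<and> X $$ (j,0) = 0}"

definition comm :: "complex mat \<Rightarrow> complex mat \<Rightarrow> complex mat" where
  "comm X Y = X * Y - Y * X"

text \<open>omega_p([X,p],[Y,p]) = (1/i) Tr(p[X,Y]), expressed on representatives X, Y.\<close>
definition omega :: "complex mat \<Rightarrow> complex mat \<Rightarrow> complex mat \<Rightarrow> complex" where
  "omega p X Y = (1 / \<i>) * mtrace (p * comm X Y)"

definition tangent_orbit :: "nat \<Rightarrow> complex mat \<Rightarrow> complex mat set" where
  "tangent_orbit n p = {comm X p | X. X \<in> u_alg (n+1)}"

definition tangent_K :: "nat \<Rightarrow> complex mat \<Rightarrow> complex mat set" where
  "tangent_K n p = {comm X p | X. X \<in> k_alg n}"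

text \<open>omega-orthogonal complement of the tangent space of the K-orbit inside T_p O
  (omega does not depend on the choice of representatives).\<close>
definition tangent_K_perp :: "nat \<Rightarrow> complex mat \<Rightarrow> complex mat set" where
  "tangent_K_perp n p = {comm X p | X. X \<in> u_alg (n+1) \<and> (\<forall>Y\<in>k_alg n. omega p X Y = 0)}"

definition Tmap :: "nat \<Rightarrow> complex mat \<Rightarrow> complex vec" where
  "Tmap n A = vec n (\<lambda>j. A $$ (j+1, 0))"

definition c_const :: "nat \<Rightarrow> (nat \<Rightarrow> real) \<Rightarrow> (nat \<Rightarrow> real) \<Rightarrow> real" where
  "c_const n lam mu = (\<Sum>j\<le>n. lam j) - (\<Sum>j<n. mu j)"

definition z_vec :: "nat \<Rightarrow> (nat \<Rightarrow> real) \<Rightarrow> (nat \<Rightarrow> real) \<Rightarrow> nat \<Rightarrow> real" where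
  "z_vec n lam mu j =
     (if \<exists>i<mcount mu n. j = block_start n mu i then r_coef n lam mu (mu j) else 0)"

definition p_tilde :: "nat \<Rightarrow> (nat \<Rightarrow> real) \<Rightarrow> (nat \<Rightarrow> real) \<Rightarrow> complex mat" where
  "p_tilde n lam mu = mat (n+1) (n+1) (\<lambda>(a,b).
      if a = 0 \<and> b = 0 then complex_of_real (c_const n lam mu)
      else if a = 0 then cnj (complex_of_real (z_vec n lam mu (b-1)))
      else if b = 0 then complex_of_real (z_vec n lam mu (a-1))
      else if a = b then complex_of_real (mu (a-1)) else 0)"

definition V_space :: "nat \<Rightarrow> (nat \<Rightarrow> real) \<Rightarrow> (nat \<Rightarrow> real) \<Rightarrow> complex vec set" where
  "V_space n lam mu = Tmap n ` tangent_K_perp n (p_tilde n lam mu)"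

definition U_space :: "nat \<Rightarrow> (nat \<Rightarrow> real) \<Rightarrow> (nat \<Rightarrow> real) \<Rightarrow> complex vec set" where
  "U_space n lam mu = Tmap n ` (tangent_K n (p_tilde n lam mu) \<inter> tangent_K_perp n (p_tilde n lam mu))"

definition V_block :: "nat \<Rightarrow> (nat \<Rightarrow> real) \<Rightarrow> (nat \<Rightarrow> real) \<Rightarrow> nat \<Rightarrow> complex vec set" where
  "V_block n lam mu i = block_proj n mu i ` V_space n lam mu"

definition U_block :: "nat \<Rightarrow> (nat \<Rightarrow> real) \<Rightarrow> (nat \<Rightarrow> real) \<Rightarrow> nat \<Rightarrow> complex vec set" where
  "U_block n lam mu i = block_proj n mu i ` U_space n lam mu"

definition L_group :: "nat \<Rightarrow> (nat \<Rightarrow> real) \<Rightarrow> (nat \<Rightarrow> real) \<Rightarrow> nat \<Rightarrow> complex mat set" where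
  "L_group n lam mu i =
     (let d = block_size n mu i in
      if is_M n lam mu (dvals mu n ! i)
      then {g \<in> unitary_grp d. g $$ (0,0) = 1 \<and> (\<forall>j. 0 < j \<and> j < d \<longrightarrow> g $$ (0,j) = 0 \<and> g $$ (j,0) = 0)}
      else unitary_grp d)"

definition coset :: "complex vec set \<Rightarrow> complex vec \<Rightarrow> complex vec set" where
  "coset U v = (\<lambda>u. v + u) ` U"

definition quot :: "complex vec set \<Rightarrow> complex vec set \<Rightarrow> complex vec set set" where
  "quot V U = coset U ` V"

definition quot_rep_iso :: "complex vec set \<Rightarrow> complex vec set \<Rightarrow> complex mat set \<Rightarrow> complex vec set \<Rightarrow> bool" where
  "quot_rep_iso V U G W \<longleftrightarrow>
     (\<exists>phi. bij_betw phi (quot V U) W \<and>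
        (\<forall>a::real. \<forall>x\<in>V. \<forall>y\<in>V.
            phi (coset U (complex_of_real a \<cdot>\<^sub>v x + y)) = complex_of_real a \<cdot>\<^sub>v phi (coset U x) + phi (coset U y)) \<and>
        (\<forall>g\<in>G. \<forall>x\<in>V. phi (coset U (g *\<^sub>v x)) = g *\<^sub>v phi (coset U x)))"

end

(* Write [X,p] for the tangent vector of X in u(n+1) at p = p_tilde. It is omega-orthogonal to the
   K-orbit iff the lower-right n x n block of [X,p] vanishes: pairing with the skew-Hermitian
   matrices E_kl - E_lk and i (E_kl + E_lk) of k picks out its entries. As the lower-right block of p
   is diag(mu), these equations express X_kl (mu_k <> mu_l) through the first column of X, and on the
   block of a value v that is not an M-value the lower-left entries of [X,p] become F(v) X_k0 for the
   secular function F(v) = c - v + sum_{t in M} r_t^2 / (v - t). Interpolating prod_{l in W} (x - l)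
   at the M-values gives prod_{l in W} (v - l) = - prod_{t in M} (v - t) F(v), so F vanishes off M
   exactly at the W-values, and interlacing makes every r_t^2 positive. Hence V_i = C^(n_i) and
   U_i = 0 on a parallelogram block and V_i = 0 on a W-block, while on an M-block, where z has the
   single nonzero entry r_t at the start of the block, V_i = U_i consists of the vectors with purely
   imaginary first coordinate. *)

theory Submission
  imports Defs
begin

section \<open>Counting and polynomial interpolation\<close>

lemma downward_closed_eq_lessThan_card:
  fixes S :: "nat set"
  assumes "S \<subseteq> {..<N}" and down: "\<And>i j. i \<le> j \<Longrightarrow> j \<in> S \<Longrightarrow> i \<in> S"
  shows "S = {..<card S}"
proof -
  have fin: "finite S" using assms(1) finite_subset by blast
  show ?thesis
  proof (intro equalityI subsetI)
    fix j assume "j \<in> S"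
    then have "{..j} \<subseteq> S" using down by auto
    then have "card {..j} \<le> card S" using card_mono fin by blast
    then show "j \<in> {..<card S}" by simp
  next
    fix j assume j: "j \<in> {..<card S}"
    show "j \<in> S"
    proof (rule ccontr)
      assume "j \<notin> S"
      then have "S \<subseteq> {..<j}" using down by (meson lessThan_iff not_le_imp_less subsetI)
      then have "card S \<le> card {..<j}" by (intro card_mono) auto
      then show False using j by simp
    qed
  qed
qed

lemma sum_lessThan_by_values:
  fixes f :: "nat \<Rightarrow> 'a" and h :: "'a \<Rightarrow> 'b::comm_semiring_1"
  assumes "finite T" "f ` {..<N} \<subseteq> T"
  shows "(\<Sum>j<N. h (f j)) = (\<Sum>y\<in>T. of_nat (card {j. j < N \<and> f j = y}) * h y)"
  using sum.group[OF finite_lessThan assms, of "\<lambda>j. h (f j)"] by simp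

lemma of_nat_card_lessThan_filter:
  fixes P :: "nat \<Rightarrow> bool"
  shows "of_nat (card {j. j < N \<and> P j}) = (\<Sum>j<N. if P j then 1 else (0::'a::comm_semiring_1))"
proof -
  have "{j. j < N \<and> P j} = {j \<in> {..<N}. P j}" by auto
  then have "of_nat (card {j. j < N \<and> P j}) = (\<Sum>j\<in>{j \<in> {..<N}. P j}. (1::'a))" by simp
  also have "\<dots> = (\<Sum>j<N. if P j then 1 else 0)" by (rule sum.inter_filter) simp
  finally show ?thesis .
qed

lemma sign_prod_diff_pos:
  fixes S :: "real set"
  assumes "finite S" "t \<notin> S"
  shows "(-1) ^ card {s\<in>S. t < s} * (\<Prod>s\<in>S. t - s) > 0"
  using assms
proof (induction S rule: finite_induct)
  case empty
  then show ?case by simp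
next
  case (insert x S)
  have IH: "(-1) ^ card {s\<in>S. t < s} * (\<Prod>s\<in>S. t - s) > 0" using insert by simp
  have prod: "(\<Prod>s\<in>insert x S. t - s) = (t - x) * (\<Prod>s\<in>S. t - s)" using insert by simp
  show ?case
  proof (cases "t < x")
    case True
    then have "{s\<in>insert x S. t < s} = insert x {s\<in>S. t < s}" by auto
    then have "card {s\<in>insert x S. t < s} = Suc (card {s\<in>S. t < s})" using insert by simp
    then have "(-1) ^ card {s\<in>insert x S. t < s} * (\<Prod>s\<in>insert x S. t - s)
        = ((-1) ^ card {s\<in>S. t < s} * (\<Prod>s\<in>S. t - s)) * (x - t)" unfolding prod by (simp add: algebra_simps)
    then show ?thesis using IH True by simp
  next
    case False
    then have "{s\<in>insert x S. t < s} = {s\<in>S. t < s}" by auto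
    then have "(-1) ^ card {s\<in>insert x S. t < s} * (\<Prod>s\<in>insert x S. t - s)
        = ((-1) ^ card {s\<in>S. t < s} * (\<Prod>s\<in>S. t - s)) * (t - x)" unfolding prod by (simp add: algebra_simps)
    moreover have "x < t" using False insert by auto
    ultimately show ?thesis using IH by simp
  qed
qed

lemma coeff_prod_linear:
  fixes S :: "'a::comm_ring_1 set"
  assumes "finite S"
  shows "coeff (\<Prod>s\<in>S. [:-s,1:]) (card S) = 1 \<and> (\<forall>j>card S. coeff (\<Prod>s\<in>S. [:-s,1:]) j = 0)
     \<and> (card S \<ge> 1 \<longrightarrow> coeff (\<Prod>s\<in>S. [:-s,1:]) (card S - 1) = - (\<Sum>s\<in>S. s))"
  using assms
proof (induction S rule: finite_induct)
  case empty
  then show ?case by (simp add: coeff_eq_0)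
next
  case (insert x S)
  define P where "P = (\<Prod>s\<in>S. [:-s,1:])"
  have "(\<Prod>s\<in>insert x S. [:-s,1:]) = Polynomial.smult (-x) P + pCons 0 P"
    using insert by (simp add: P_def mult_pCons_left)
  then have coeff_insert: "coeff (\<Prod>s\<in>insert x S. [:-s,1:]) j = -x * coeff P j + (if j = 0 then 0 else coeff P (j - 1))" for j
    by (cases j) auto
  have card_insert: "card (insert x S) = Suc (card S)" using insert by simp
  have IH: "coeff P (card S) = 1" "\<And>j. j > card S \<Longrightarrow> coeff P j = 0"
    "card S \<ge> 1 \<Longrightarrow> coeff P (card S - 1) = - (\<Sum>s\<in>S. s)"
    using insert.IH unfolding P_def by auto
  have "card S = 0 \<Longrightarrow> (\<Sum>s\<in>S. s) = 0" using insert by simp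
  then show ?case
    unfolding coeff_insert card_insert using IH insert by (cases "card S") auto
qed

lemma coeff_prod_linear_diff_eq_0:
  fixes W M :: "'a::comm_ring_1 set"
  assumes "finite W" "finite M" "card W = card M + 1" "c = (\<Sum>l\<in>W. l) - (\<Sum>t\<in>M. t)" "j \<ge> card M"
  shows "coeff ((\<Prod>s\<in>W. [:-s,1:]) - [:-c,1:] * (\<Prod>s\<in>M. [:-s,1:])) j = 0"
proof -
  define G where "G = (\<Prod>s\<in>W. [:-s,1:])"
  define H where "H = (\<Prod>s\<in>M. [:-s,1:])"
  define k where "k = card M"
  have cG: "coeff G (k+1) = 1" "\<And>j. j > k+1 \<Longrightarrow> coeff G j = 0" "coeff G k = - (\<Sum>l\<in>W. l)"
    using coeff_prod_linear[OF assms(1)] assms(3) unfolding G_def k_def by auto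
  have cH: "coeff H k = 1" "\<And>j. j > k \<Longrightarrow> coeff H j = 0" "k \<ge> 1 \<Longrightarrow> coeff H (k - 1) = - (\<Sum>l\<in>M. l)"
    using coeff_prod_linear[OF assms(2)] unfolding H_def k_def by auto
  have "k = 0 \<Longrightarrow> (\<Sum>l\<in>M. l) = 0" using assms(2) unfolding k_def by simp
  moreover have "coeff ([:-c,1:] * H) j = -c * coeff H j + (if j = 0 then 0 else coeff H (j - 1))"
    by (cases j) (simp_all add: mult_pCons_left)
  moreover have "j = k \<or> j = k + 1 \<or> j > k + 1" using assms(5) unfolding k_def by linarith
  ultimately show ?thesis
    unfolding G_def[symmetric] H_def[symmetric] using cG cH assms(4) by (cases "k = 0") auto
qed

lemma poly_eq_0_if_roots_ge_degree_bound:
  fixes Q :: "'a::idom poly"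
  assumes "finite M" and coeffs: "\<And>j. j \<ge> card M \<Longrightarrow> coeff Q j = 0" and roots: "\<And>t. t \<in> M \<Longrightarrow> poly Q t = 0"
  shows "Q = 0"
proof (rule ccontr)
  assume "Q \<noteq> 0"
  then have "card M \<le> card {x. poly Q x = 0}"
    using roots poly_roots_finite by (intro card_mono) auto
  also have "\<dots> \<le> degree Q" using card_poly_roots_bound[OF \<open>Q \<noteq> 0\<close>] .
  finally have "coeff Q (degree Q) = 0" using coeffs by simp
  then show False using \<open>Q \<noteq> 0\<close> by simp
qed

lemma prod_diff_interpolation:
  fixes W M :: "'a::idom set" and c :: 'a and A :: "'a \<Rightarrow> 'a"
  assumes fW: "finite W" and fM: "finite M" and card_WM: "card W = card M + 1"
    and c_eq: "c = (\<Sum>l\<in>W. l) - (\<Sum>t\<in>M. t)"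
    and A_eq: "\<And>t. t \<in> M \<Longrightarrow> A t * (\<Prod>t'\<in>M-{t}. t - t') = - (\<Prod>l\<in>W. t - l)"
  shows "(\<Prod>l\<in>W. x - l) = (x - c) * (\<Prod>t\<in>M. x - t) - (\<Sum>t\<in>M. A t * (\<Prod>t'\<in>M-{t}. x - t'))"
proof -
  define D where "D = (\<Prod>s\<in>W. [:-s,1:]) - [:-c,1:] * (\<Prod>s\<in>M. [:-s,1:])
      + (\<Sum>t\<in>M. Polynomial.smult (A t) (\<Prod>s\<in>M-{t}. [:-s,1:]))"
  have poly_D: "poly D y = (\<Prod>l\<in>W. y - l) - ((y - c) * (\<Prod>t\<in>M. y - t) - (\<Sum>t\<in>M. A t * (\<Prod>t'\<in>M-{t}. y - t')))"
    for y
    by (simp add: D_def poly_sum poly_prod algebra_simps)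
  have "coeff (\<Prod>s\<in>M-{t}. [:-s,1:]) j = 0" if "t \<in> M" "j \<ge> card M" for t j
    using coeff_prod_linear[of "M - {t}"] fM that card_Diff1_less[OF fM that(1)] by auto
  then have "coeff D j = 0" if "j \<ge> card M" for j
    using coeff_prod_linear_diff_eq_0[OF fW fM card_WM c_eq that] that by (simp add: D_def coeff_sum)
  moreover have "poly D t = 0" if t: "t \<in> M" for t
  proof -
    have "(\<Prod>t'\<in>M. t - t') = 0" using t fM by (intro prod_zero) auto
    moreover have "(\<Sum>t'\<in>M-{t}. A t' * (\<Prod>t''\<in>M-{t'}. t - t'')) = 0"
      using t fM by (intro sum.neutral ballI) (auto intro!: prod_zero)
    ultimately show ?thesis using A_eq[OF t] sum.remove[OF fM t, of "\<lambda>t'. A t' * (\<Prod>t''\<in>M-{t'}. t - t'')"]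
      by (simp add: poly_D)
  qed
  ultimately have "D = 0" by (rule poly_eq_0_if_roots_ge_degree_bound[OF fM])
  then show ?thesis using poly_D[of x] by simp
qed

section \<open>Matrices and quotient representations\<close>

lemma mat_mult_entry_split_first:
  assumes "A \<in> carrier_mat (Suc n) (Suc n)" "B \<in> carrier_mat (Suc n) (Suc n)" "i < Suc n" "j < Suc n"
  shows "(A * B) $$ (i,j) = A$$(i,0) * B$$(0,j) + (\<Sum>l<n. A$$(i,Suc l) * B$$(Suc l,j))"
  using assms by (simp add: scalar_prod_def atLeast0LessThan sum.lessThan_Suc_shift del: sum.lessThan_Suc)

lemma mtrace_mult:
  assumes "A \<in> carrier_mat N N" "B \<in> carrier_mat N N"
  shows "mtrace (A * B) = (\<Sum>i<N. \<Sum>j<N. A$$(i,j) * B$$(j,i))"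
  using assms by (simp add: mtrace_def scalar_prod_def atLeast0LessThan)

lemma mtrace_mult_commute:
  assumes "A \<in> carrier_mat N N" "B \<in> carrier_mat N N"
  shows "mtrace (A * B) = mtrace (B * A)"
  unfolding mtrace_mult[OF assms] mtrace_mult[OF assms(2,1)]
  by (subst sum.swap) (simp add: mult.commute)

lemma mtrace_minus:
  assumes "A \<in> carrier_mat N N" "B \<in> carrier_mat N N"
  shows "mtrace (A - B) = mtrace A - mtrace B"
  using assms by (simp add: mtrace_def sum_subtractf)

lemma omega_eq_mtrace_comm:
  assumes P: "P \<in> carrier_mat N N" and X: "X \<in> carrier_mat N N" and Y: "Y \<in> carrier_mat N N"
  shows "omega P X Y = - (1 / \<i>) * mtrace (comm X P * Y)"
proof -
  have XY: "X * Y \<in> carrier_mat N N" and YX: "Y * X \<in> carrier_mat N N" and PX: "P * X \<in> carrier_mat N N"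
    and XP: "X * P \<in> carrier_mat N N" and PY: "P * Y \<in> carrier_mat N N" using P X Y by auto
  have "mtrace (P * comm X Y) = mtrace (P * (X * Y)) - mtrace (P * (Y * X))"
    unfolding comm_def mult_minus_distrib_mat[OF P XY YX] using P XY YX by (intro mtrace_minus[where N=N]) auto
  also have "P * (X * Y) = P * X * Y" using assoc_mult_mat[OF P X Y] by simp
  also have "mtrace (P * (Y * X)) = mtrace (X * P * Y)"
    using assoc_mult_mat[OF P Y X] assoc_mult_mat[OF X P Y] mtrace_mult_commute[OF PY X] by simp
  also have "mtrace (P * X * Y) - mtrace (X * P * Y) = - mtrace (comm X P * Y)"
    unfolding comm_def minus_mult_distrib_mat[OF XP PX Y] using XP PX Y by (simp add: mtrace_minus[where N=N])
  finally show ?thesis unfolding omega_def by simp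
qed

definition two_entry_mat :: "nat \<Rightarrow> nat \<Rightarrow> nat \<Rightarrow> complex \<Rightarrow> complex \<Rightarrow> complex mat" where
  "two_entry_mat N a b \<alpha> \<beta> =
     mat N N (\<lambda>(x,y). (if x = a \<and> y = b then \<alpha> else 0) + (if x = b \<and> y = a then \<beta> else 0))"

lemma two_entry_mat_carrier: "two_entry_mat N a b \<alpha> \<beta> \<in> carrier_mat N N"
  unfolding two_entry_mat_def by simp

lemma mtrace_mult_two_entry_mat:
  assumes C: "C \<in> carrier_mat N N" and "a < N" "b < N"
  shows "mtrace (C * two_entry_mat N a b \<alpha> \<beta>) = C$$(b,a) * \<alpha> + C$$(a,b) * \<beta>"
proof -
  have row: "(\<Sum>j<N. C$$(i,j) * two_entry_mat N a b \<alpha> \<beta> $$ (j,i))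
      = (if i = b then C$$(i,a) * \<alpha> else 0) + (if i = a then C$$(i,b) * \<beta> else 0)" if "i < N" for i
  proof -
    have "(\<Sum>j<N. C$$(i,j) * two_entry_mat N a b \<alpha> \<beta> $$ (j,i))
        = (\<Sum>j<N. (if j = a then (if i = b then C$$(i,j) * \<alpha> else 0) else 0)
                  + (if j = b then (if i = a then C$$(i,j) * \<beta> else 0) else 0))"
      using that by (intro sum.cong refl) (auto simp: two_entry_mat_def distrib_left)
    then show ?thesis using assms by (simp add: sum.distrib)
  qed
  have "mtrace (C * two_entry_mat N a b \<alpha> \<beta>)
      = (\<Sum>i<N. (if i = b then C$$(i,a) * \<alpha> else 0) + (if i = a then C$$(i,b) * \<beta> else 0))"
    unfolding mtrace_mult[OF C two_entry_mat_carrier] by (rule sum.cong) (simp_all add: row)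
  also have "\<dots> = C$$(b,a) * \<alpha> + C$$(a,b) * \<beta>" using assms by (simp add: sum.distrib)
  finally show ?thesis .
qed

lemma adj_two_entry_mat:
  assumes "cnj \<beta> = - \<alpha>"
  shows "adj (two_entry_mat N a b \<alpha> \<beta>) = - two_entry_mat N a b \<alpha> \<beta>"
proof (rule eq_matI)
  fix i j assume "i < dim_row (- two_entry_mat N a b \<alpha> \<beta>)" "j < dim_col (- two_entry_mat N a b \<alpha> \<beta>)"
  then have "i < N" "j < N" by (simp_all add: two_entry_mat_def)
  moreover have "cnj \<alpha> = - \<beta>" using arg_cong[OF assms, of cnj] by simp
  ultimately show "adj (two_entry_mat N a b \<alpha> \<beta>) $$ (i,j) = (- two_entry_mat N a b \<alpha> \<beta>) $$ (i,j)"
    using assms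
    by (cases "i = a"; cases "j = b"; cases "i = b"; cases "j = a") (simp_all add: adj_def two_entry_mat_def)
qed (simp_all add: adj_def two_entry_mat_def)

lemma u_alg_cnj_entry:
  assumes X: "X \<in> u_alg N" and "a < N" "b < N"
  shows "cnj (X $$ (b,a)) = - X $$ (a,b)"
proof -
  have "X \<in> carrier_mat N N" "adj X = - X" using X unfolding u_alg_def by auto
  then have "adj X $$ (a,b) = (- X) $$ (a,b)" by simp
  then show ?thesis using assms \<open>X \<in> carrier_mat N N\<close> by (simp add: adj_def)
qed

lemma cnj_eq_minus_iff: "cnj z = - z \<longleftrightarrow> Re z = 0"
  by (simp add: complex_eq_iff)

lemma quot_rep_iso_carrier_vec:
  assumes V: "V = carrier_vec d" and U: "U = {0\<^sub>v d}" and G: "G \<subseteq> carrier_mat d d"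
  shows "quot_rep_iso V U G (carrier_vec d)"
proof -
  have coset_eq: "coset U x = {x}" if "x \<in> carrier_vec d" for x
    using that unfolding U coset_def by simp
  have "quot V U = (\<lambda>x. {x}) ` carrier_vec d" unfolding quot_def V using coset_eq by auto
  then have "bij_betw the_elem (quot V U) (carrier_vec d)"
    by (auto intro!: bij_betw_imageI simp: inj_on_def image_image)
  moreover have "the_elem (coset U (complex_of_real a \<cdot>\<^sub>v x + y))
      = complex_of_real a \<cdot>\<^sub>v the_elem (coset U x) + the_elem (coset U y)" if "x \<in> V" "y \<in> V" for a x y
    using that V by (simp add: coset_eq)
  moreover have "the_elem (coset U (g *\<^sub>v x)) = g *\<^sub>v the_elem (coset U x)" if "g \<in> G" "x \<in> V" for g x
    using that G V by (auto simp: coset_eq)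
  ultimately show ?thesis unfolding quot_rep_iso_def by blast
qed

lemma quot_rep_iso_self:
  assumes U_carrier: "U \<subseteq> carrier_vec d" and U0: "0\<^sub>v d \<in> U"
    and U_add: "\<And>x y. x \<in> U \<Longrightarrow> y \<in> U \<Longrightarrow> x + y \<in> U"
    and U_diff: "\<And>x y. x \<in> U \<Longrightarrow> y \<in> U \<Longrightarrow> y - x \<in> U"
    and G: "G \<subseteq> carrier_mat d d"
  shows "quot_rep_iso U U G {0\<^sub>v d}"
proof -
  have coset_eq: "coset U x = U" if x: "x \<in> U" for x
  proof (intro equalityI subsetI)
    fix w assume "w \<in> coset U x"
    then show "w \<in> U" using U_add x unfolding coset_def by auto
  next
    fix w assume w: "w \<in> U"
    have "dim_vec x = d" "dim_vec w = d" using x w U_carrier by auto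
    then have "x + (w - x) = w" by (intro eq_vecI) auto
    then show "w \<in> coset U x" unfolding coset_def using U_diff[OF x w] by (metis image_eqI)
  qed
  have "quot U U = {U}" unfolding quot_def using coset_eq U0 by auto
  then have "bij_betw (\<lambda>_. 0\<^sub>v d) (quot U U) {0\<^sub>v d}" by (simp add: bij_betw_def)
  moreover have "g *\<^sub>v 0\<^sub>v d = 0\<^sub>v d" if "g \<in> G" for g
    using that G by (intro eq_vecI) (auto simp: scalar_prod_def)
  moreover have "complex_of_real a \<cdot>\<^sub>v 0\<^sub>v d + 0\<^sub>v d = 0\<^sub>v d" for a by (intro eq_vecI) auto
  ultimately show ?thesis unfolding quot_rep_iso_def by (intro exI[of _ "\<lambda>_. 0\<^sub>v d"]) auto
qed

section \<open>Interlacing sequences\<close>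

locale interlacing =
  fixes n :: nat and lam mu :: "nat \<Rightarrow> real"
  assumes mu_le_lam: "\<And>j. j < n \<Longrightarrow> mu j \<le> lam j"
    and lam_Suc_le_mu: "\<And>j. j < n \<Longrightarrow> lam (j+1) \<le> mu j"
begin

lemma mu_antimono: "i \<le> j \<Longrightarrow> j < n \<Longrightarrow> mu j \<le> mu i"
proof (induction j)
  case (Suc j)
  have "mu (Suc j) \<le> mu j" using mu_le_lam[of "Suc j"] lam_Suc_le_mu[of j] Suc.prems by simp
  then show ?case using Suc by (cases "i = Suc j") auto
qed simp

definition count_lam :: "(real \<Rightarrow> bool) \<Rightarrow> nat" where
  "count_lam P = card {j. j < n+1 \<and> P (lam j)}"

definition count_mu :: "(real \<Rightarrow> bool) \<Rightarrow> nat" where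
  "count_mu P = card {j. j < n \<and> P (mu j)}"

lemma count_mu_le_count_lam:
  assumes "\<And>y y'. P y \<Longrightarrow> y \<le> y' \<Longrightarrow> P y'"
  shows "count_mu P \<le> count_lam P"
proof -
  have "{j. j < n \<and> P (mu j)} \<subseteq> {j. j < n+1 \<and> P (lam j)}" using mu_le_lam assms by fastforce
  then show ?thesis unfolding count_mu_def count_lam_def by (intro card_mono) auto
qed

lemma count_lam_le_Suc_count_mu:
  assumes up: "\<And>y y'. P y \<Longrightarrow> y \<le> y' \<Longrightarrow> P y'"
  shows "count_lam P \<le> count_mu P + 1"
proof -
  have "{j. j < n+1 \<and> P (lam j)} \<subseteq> insert 0 (Suc ` {j. j < n \<and> P (mu j)})"
  proof
    fix j assume j: "j \<in> {j. j < n+1 \<and> P (lam j)}"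
    show "j \<in> insert 0 (Suc ` {j. j < n \<and> P (mu j)})"
    proof (cases j)
      case (Suc k)
      then have "k < n" "P (lam (k+1))" using j by auto
      then have "P (mu k)" using lam_Suc_le_mu[of k] up by blast
      then show ?thesis using Suc \<open>k < n\<close> by blast
    qed simp
  qed
  then have "count_lam P \<le> card (insert 0 (Suc ` {j. j < n \<and> P (mu j)}))"
    unfolding count_lam_def by (intro card_mono) auto
  also have "\<dots> \<le> Suc (card (Suc ` {j. j < n \<and> P (mu j)}))" by (simp add: card_insert_if)
  also have "card (Suc ` {j. j < n \<and> P (mu j)}) = count_mu P" unfolding count_mu_def by (simp add: card_image)
  finally show ?thesis by simp
qed

lemma mult_lam_split:
  "mult lam (n+1) x = count_lam (\<lambda>y. x \<le> y) - count_lam (\<lambda>y. x < y)"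
  "count_lam (\<lambda>y. x < y) \<le> count_lam (\<lambda>y. x \<le> y)"
proof -
  have sub: "{j. j < n+1 \<and> x < lam j} \<subseteq> {j. j < n+1 \<and> x \<le> lam j}" by auto
  have "{j. j < n+1 \<and> lam j = x} = {j. j < n+1 \<and> x \<le> lam j} - {j. j < n+1 \<and> x < lam j}" by auto
  then show "mult lam (n+1) x = count_lam (\<lambda>y. x \<le> y) - count_lam (\<lambda>y. x < y)"
    unfolding mult_def count_lam_def using sub by (simp add: card_Diff_subset)
  show "count_lam (\<lambda>y. x < y) \<le> count_lam (\<lambda>y. x \<le> y)"
    unfolding count_lam_def using sub by (intro card_mono) auto
qed

lemma mult_mu_split:
  "mult mu n x = count_mu (\<lambda>y. x \<le> y) - count_mu (\<lambda>y. x < y)"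
  "count_mu (\<lambda>y. x < y) \<le> count_mu (\<lambda>y. x \<le> y)"
proof -
  have sub: "{j. j < n \<and> x < mu j} \<subseteq> {j. j < n \<and> x \<le> mu j}" by auto
  have "{j. j < n \<and> mu j = x} = {j. j < n \<and> x \<le> mu j} - {j. j < n \<and> x < mu j}" by auto
  then show "mult mu n x = count_mu (\<lambda>y. x \<le> y) - count_mu (\<lambda>y. x < y)"
    unfolding mult_def count_mu_def using sub by (simp add: card_Diff_subset)
  show "count_mu (\<lambda>y. x < y) \<le> count_mu (\<lambda>y. x \<le> y)"
    unfolding count_mu_def using sub by (intro card_mono) auto
qed

definition mult_gap :: "real \<Rightarrow> real" where
  "mult_gap x = real (mult lam (n+1) x) - real (mult mu n x)"

lemma is_W_iff: "is_W n lam mu x \<longleftrightarrow> mult_gap x = 1"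
  unfolding is_W_def mult_gap_def by linarith

lemma is_M_iff: "is_M n lam mu x \<longleftrightarrow> mult_gap x = -1"
  unfolding is_M_def mult_gap_def by linarith

lemma is_P_iff: "is_P n lam mu x \<longleftrightarrow> mult_gap x = 0"
  unfolding is_P_def mult_gap_def by linarith

lemma mult_gap_cases: "mult_gap x = -1 \<or> mult_gap x = 0 \<or> mult_gap x = 1"
  and count_lam_greater_if_M: "mult_gap x = -1 \<Longrightarrow> real (count_lam (\<lambda>y. x < y)) = real (count_mu (\<lambda>y. x < y)) + 1"
proof -
  have ge: "count_mu (\<lambda>y. x \<le> y) \<le> count_lam (\<lambda>y. x \<le> y)" "count_lam (\<lambda>y. x \<le> y) \<le> count_mu (\<lambda>y. x \<le> y) + 1"
    by (rule count_mu_le_count_lam count_lam_le_Suc_count_mu; auto)+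
  have gt: "count_mu (\<lambda>y. x < y) \<le> count_lam (\<lambda>y. x < y)" "count_lam (\<lambda>y. x < y) \<le> count_mu (\<lambda>y. x < y) + 1"
    by (rule count_mu_le_count_lam count_lam_le_Suc_count_mu; auto)+
  have gap: "mult_gap x = (real (count_lam (\<lambda>y. x \<le> y)) - real (count_mu (\<lambda>y. x \<le> y)))
     - (real (count_lam (\<lambda>y. x < y)) - real (count_mu (\<lambda>y. x < y)))"
    unfolding mult_gap_def mult_lam_split(1) mult_mu_split(1)
    using mult_lam_split(2) mult_mu_split(2) by (simp add: of_nat_diff)
  have "real (count_lam (\<lambda>y. x \<le> y)) - real (count_mu (\<lambda>y. x \<le> y)) \<in> {0, 1}"
    using ge by (cases "count_lam (\<lambda>y. x \<le> y) = count_mu (\<lambda>y. x \<le> y)") auto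
  moreover have "real (count_lam (\<lambda>y. x < y)) - real (count_mu (\<lambda>y. x < y)) \<in> {0, 1}"
    using gt by (cases "count_lam (\<lambda>y. x < y) = count_mu (\<lambda>y. x < y)") auto
  ultimately show "mult_gap x = -1 \<or> mult_gap x = 0 \<or> mult_gap x = 1"
    and "mult_gap x = -1 \<Longrightarrow> real (count_lam (\<lambda>y. x < y)) = real (count_mu (\<lambda>y. x < y)) + 1"
    unfolding gap by auto
qed

definition all_vals :: "real set" where
  "all_vals = lam ` {..<n+1} \<union> mu ` {..<n}"

definition W_vals :: "real set" where
  "W_vals = {x\<in>all_vals. mult_gap x = 1}"

definition M_vals :: "real set" where
  "M_vals = {x\<in>all_vals. mult_gap x = -1}"

lemma finite_all_vals: "finite all_vals"
  unfolding all_vals_def by simp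

lemma finite_W_vals: "finite W_vals"
  unfolding W_vals_def using finite_all_vals by simp

lemma finite_M_vals: "finite M_vals"
  unfolding M_vals_def using finite_all_vals by simp

lemma M_vals_disjoint_W_vals: "t \<in> M_vals \<Longrightarrow> t \<notin> W_vals"
  unfolding M_vals_def W_vals_def by auto

lemma sum_lam_minus_sum_mu:
  fixes h :: "real \<Rightarrow> real"
  shows "(\<Sum>j<n+1. h (lam j)) - (\<Sum>j<n. h (mu j)) = (\<Sum>x\<in>W_vals. h x) - (\<Sum>x\<in>M_vals. h x)"
proof -
  have "(\<Sum>j<n+1. h (lam j)) = (\<Sum>y\<in>all_vals. real (mult lam (n+1) y) * h y)"
    unfolding mult_def by (rule sum_lessThan_by_values[OF finite_all_vals]) (auto simp: all_vals_def)
  moreover have "(\<Sum>j<n. h (mu j)) = (\<Sum>y\<in>all_vals. real (mult mu n y) * h y)"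
    unfolding mult_def by (rule sum_lessThan_by_values[OF finite_all_vals]) (auto simp: all_vals_def)
  ultimately have "(\<Sum>j<n+1. h (lam j)) - (\<Sum>j<n. h (mu j)) = (\<Sum>y\<in>all_vals. mult_gap y * h y)"
    unfolding mult_gap_def by (simp add: sum_subtractf left_diff_distrib)
  also have "\<dots> = (\<Sum>y\<in>all_vals. (if mult_gap y = 1 then h y else 0) - (if mult_gap y = -1 then h y else 0))"
    by (rule sum.cong[OF refl]) (use mult_gap_cases in auto)
  also have "\<dots> = (\<Sum>x\<in>W_vals. h x) - (\<Sum>x\<in>M_vals. h x)"
    unfolding W_vals_def M_vals_def using finite_all_vals by (simp add: sum_subtractf sum.inter_filter)
  finally show ?thesis .
qed

lemma card_W_vals: "card W_vals = card M_vals + 1"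
  using sum_lam_minus_sum_mu[of "\<lambda>_. 1"] by simp

lemma c_const_eq: "c_const n lam mu = (\<Sum>x\<in>W_vals. x) - (\<Sum>x\<in>M_vals. x)"
proof -
  have "{..n} = {..<n+1}" by auto
  then show ?thesis unfolding c_const_def using sum_lam_minus_sum_mu[of "\<lambda>x. x"] by simp
qed

lemma card_W_vals_above:
  assumes "t \<in> M_vals"
  shows "card {x\<in>W_vals. t < x} = card {x\<in>M_vals. t < x} + 1"
proof -
  have "real (count_lam (\<lambda>y. t < y)) - real (count_mu (\<lambda>y. t < y))
      = (\<Sum>x\<in>W_vals. if t < x then 1 else 0) - (\<Sum>x\<in>M_vals. if t < x then 1 else 0)"
    unfolding count_lam_def count_mu_def of_nat_card_lessThan_filter by (rule sum_lam_minus_sum_mu)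
  also have "\<dots> = real (card {x\<in>W_vals. t < x}) - real (card {x\<in>M_vals. t < x})"
    using finite_W_vals finite_M_vals by (simp add: sum.inter_filter[symmetric])
  finally show ?thesis
    using count_lam_greater_if_M assms unfolding M_vals_def by auto
qed

lemma W_vals_eq: "{l\<in>vals lam (n+1). is_W n lam mu l} = W_vals"
proof (intro equalityI subsetI)
  fix x assume "x \<in> {l\<in>vals lam (n+1). is_W n lam mu l}"
  then show "x \<in> W_vals" unfolding W_vals_def all_vals_def vals_def is_W_iff by auto
next
  fix x assume "x \<in> W_vals"
  then have "mult_gap x = 1" unfolding W_vals_def by simp
  then have "mult lam (n+1) x \<noteq> 0" unfolding mult_gap_def by auto
  then have "{j. j < n+1 \<and> lam j = x} \<noteq> {}" unfolding mult_def by (metis card.empty)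
  then have "x \<in> vals lam (n+1)" unfolding vals_def by auto
  then show "x \<in> {l\<in>vals lam (n+1). is_W n lam mu l}" using \<open>mult_gap x = 1\<close> is_W_iff by simp
qed

lemma M_vals_eq: "{l\<in>vals mu n. is_M n lam mu l} = M_vals"
proof (intro equalityI subsetI)
  fix x assume "x \<in> {l\<in>vals mu n. is_M n lam mu l}"
  then show "x \<in> M_vals" unfolding M_vals_def all_vals_def vals_def is_M_iff by auto
next
  fix x assume "x \<in> M_vals"
  then have "mult_gap x = -1" unfolding M_vals_def by simp
  then have "mult mu n x \<noteq> 0" unfolding mult_gap_def by auto
  then have "{j. j < n \<and> mu j = x} \<noteq> {}" unfolding mult_def by (metis card.empty)
  then have "x \<in> vals mu n" unfolding vals_def by auto
  then show "x \<in> {l\<in>vals mu n. is_M n lam mu l}" using \<open>mult_gap x = -1\<close> is_M_iff by simp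
qed

definition r_square :: "real \<Rightarrow> real" where
  "r_square t = - (\<Prod>l\<in>W_vals. t - l) * (\<Prod>t'\<in>M_vals - {t}. 1 / (t - t'))"

lemma r_square_pos:
  assumes "t \<in> M_vals"
  shows "r_square t > 0"
proof -
  \<comment> \<open>one more W-value than M-values lies above t, so the two products have opposite signs\<close>
  define P1 where "P1 = (\<Prod>l\<in>W_vals. t - l)"
  define P2 where "P2 = (\<Prod>t'\<in>M_vals - {t}. t - t')"
  define e :: real where "e = (-1) ^ card {s\<in>M_vals. t < s}"
  have "(-1) ^ card {s\<in>W_vals. t < s} * P1 > 0" unfolding P1_def
    by (rule sign_prod_diff_pos[OF finite_W_vals M_vals_disjoint_W_vals[OF assms]])
  then have P1_sign: "- e * P1 > 0" using card_W_vals_above[OF assms] unfolding e_def by simp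
  have "(-1) ^ card {s\<in>M_vals - {t}. t < s} * P2 > 0" unfolding P2_def
    by (rule sign_prod_diff_pos) (use finite_M_vals in auto)
  moreover have "{s\<in>M_vals - {t}. t < s} = {s\<in>M_vals. t < s}" by auto
  ultimately have P2_sign: "e * P2 > 0" unfolding e_def by simp
  have "r_square t = - P1 / P2" unfolding r_square_def P1_def P2_def by (simp add: prod_dividef)
  also have "\<dots> = (- e * P1) / (e * P2)" unfolding e_def by simp
  finally show ?thesis using P1_sign P2_sign by (simp only: divide_pos_pos)
qed

lemma r_square_mult_prod:
  "t \<in> M_vals \<Longrightarrow> r_square t * (\<Prod>t'\<in>M_vals-{t}. t - t') = - (\<Prod>l\<in>W_vals. t - l)"
  using finite_M_vals by (simp add: r_square_def prod_dividef)

definition secular :: "real \<Rightarrow> real" where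
  "secular v = c_const n lam mu - v + (\<Sum>t\<in>M_vals. r_square t / (v - t))"

lemma secular_eq_0_iff:
  assumes "v \<notin> M_vals"
  shows "secular v = 0 \<longleftrightarrow> v \<in> W_vals"
proof -
  define h where "h = (\<Prod>t\<in>M_vals. v - t)"
  have "h \<noteq> 0" unfolding h_def using finite_M_vals assms by auto
  have prod_M_minus: "(\<Prod>t'\<in>M_vals-{t}. v - t') = h / (v - t)" if "t \<in> M_vals" for t
  proof -
    have "h = (v - t) * (\<Prod>t'\<in>M_vals-{t}. v - t')"
      unfolding h_def using that finite_M_vals by (simp add: prod.remove)
    moreover have "v - t \<noteq> 0" using that assms by auto
    ultimately show ?thesis by simp
  qed
  have "(\<Prod>l\<in>W_vals. v - l)
      = (v - c_const n lam mu) * h - (\<Sum>t\<in>M_vals. r_square t * (\<Prod>t'\<in>M_vals-{t}. v - t'))"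
    unfolding h_def
    by (rule prod_diff_interpolation[OF finite_W_vals finite_M_vals card_W_vals c_const_eq r_square_mult_prod])
  also have "(\<Sum>t\<in>M_vals. r_square t * (\<Prod>t'\<in>M_vals-{t}. v - t')) = h * (\<Sum>t\<in>M_vals. r_square t / (v - t))"
    unfolding sum_distrib_left by (rule sum.cong[OF refl]) (simp add: prod_M_minus)
  finally have "(\<Prod>l\<in>W_vals. v - l) = - h * secular v"
    unfolding secular_def by (simp add: algebra_simps)
  moreover have "(\<Prod>l\<in>W_vals. v - l) = 0 \<longleftrightarrow> v \<in> W_vals" using finite_W_vals by simp
  ultimately show ?thesis using \<open>h \<noteq> 0\<close> by simp
qed

end

context interlacing
begin

lemma greater_indices_eq: "{j. j < n \<and> v < mu j} = {..<count_mu (\<lambda>y. v < y)}"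
  unfolding count_mu_def
  by (rule downward_closed_eq_lessThan_card[of _ n]) (use mu_antimono in \<open>auto intro: less_le_trans\<close>)

lemma greater_eq_indices_eq: "{j. j < n \<and> v \<le> mu j} = {..<count_mu (\<lambda>y. v \<le> y)}"
  unfolding count_mu_def
  by (rule downward_closed_eq_lessThan_card[of _ n]) (use mu_antimono in \<open>auto intro: order_trans\<close>)

lemma mu_eq_iff_block_range:
  "j < n \<and> mu j = v \<longleftrightarrow> count_mu (\<lambda>y. v < y) \<le> j \<and> j < count_mu (\<lambda>y. v \<le> y)"
proof -
  have "j < n \<and> mu j = v \<longleftrightarrow> j \<in> {j. j < n \<and> v \<le> mu j} \<and> j \<notin> {j. j < n \<and> v < mu j}" by auto
  then show ?thesis unfolding greater_indices_eq greater_eq_indices_eq by auto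
qed

lemma count_mu_le: "count_mu P \<le> n"
  unfolding count_mu_def by (rule order_trans[OF card_mono[of "{..<n}"]]) auto

lemma mult_mu_pos: "v \<in> vals mu n \<Longrightarrow> mult mu n v \<ge> 1"
  unfolding vals_def mult_def by (auto simp: Suc_le_eq card_gt_0_iff)

lemma count_mu_less_lt_count_mu_le:
  "v \<in> vals mu n \<Longrightarrow> count_mu (\<lambda>y. v < y) < count_mu (\<lambda>y. v \<le> y)"
  using mult_mu_pos mult_mu_split by fastforce

lemma finite_vals: "finite (vals mu n)"
  unfolding vals_def by simp

lemma set_dvals: "set (dvals mu n) = vals mu n"
  unfolding dvals_def using finite_vals by simp

lemma dvals_strict_antimono: "i < j \<Longrightarrow> j < mcount mu n \<Longrightarrow> dvals mu n ! j < dvals mu n ! i"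
proof -
  assume ij: "i < j" "j < mcount mu n"
  have "sorted_wrt (\<lambda>x y. y < x) (dvals mu n)"
    unfolding dvals_def sorted_wrt_rev using strict_sorted_list_of_set by simp
  from sorted_wrt_nth_less[OF this ij(1)] ij(2) show ?thesis unfolding mcount_def by simp
qed

lemma dvals_in_vals: "i < mcount mu n \<Longrightarrow> dvals mu n ! i \<in> vals mu n"
  using set_dvals nth_mem unfolding mcount_def by metis

lemma block_start_eq:
  assumes i: "i < mcount mu n"
  shows "block_start n mu i = count_mu (\<lambda>y. dvals mu n ! i < y)"
proof -
  define D where "D = dvals mu n"
  define v where "v = D ! i"
  have inj: "inj_on ((!) D) {..<i}"
    using i unfolding D_def mcount_def by (intro inj_on_nth) (auto simp: dvals_def)
  have earlier_vals: "(!) D ` {..<i} = {t\<in>vals mu n. v < t}"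
  proof (intro equalityI subsetI)
    fix t assume "t \<in> (!) D ` {..<i}"
    then show "t \<in> {t\<in>vals mu n. v < t}"
      using dvals_strict_antimono[OF _ i] dvals_in_vals i unfolding D_def v_def by auto
  next
    fix t assume t: "t \<in> {t\<in>vals mu n. v < t}"
    then obtain k where k: "k < length D" "D ! k = t"
      using set_dvals unfolding D_def by (metis (no_types, lifting) in_set_conv_nth mem_Collect_eq)
    have "k < i"
    proof (rule ccontr)
      assume "\<not> k < i"
      then have "k = i \<or> i < k" by auto
      then show False using dvals_strict_antimono[of i k] k t i unfolding D_def v_def mcount_def by auto
    qed
    then show "t \<in> (!) D ` {..<i}" using k by auto
  qed
  have "real (block_start n mu i) = (\<Sum>t\<in>(!) D ` {..<i}. real (mult mu n t))"
    unfolding block_start_def block_size_def D_def by (simp add: sum.reindex[OF inj[unfolded D_def]])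
  also have "\<dots> = (\<Sum>y\<in>vals mu n. if v < y then real (mult mu n y) else 0)"
    unfolding earlier_vals using finite_vals by (simp add: sum.inter_filter)
  also have "\<dots> = (\<Sum>y\<in>vals mu n. real (card {j. j < n \<and> mu j = y}) * (if v < y then 1 else 0))"
    unfolding mult_def by (rule sum.cong) auto
  also have "\<dots> = (\<Sum>j<n. if v < mu j then 1 else 0)"
    by (rule sum_lessThan_by_values[OF finite_vals, symmetric]) (auto simp: vals_def)
  also have "\<dots> = real (count_mu (\<lambda>y. v < y))"
    unfolding count_mu_def by (rule of_nat_card_lessThan_filter[symmetric])
  finally show ?thesis unfolding v_def D_def by linarith
qed

lemma z_vec_eq:
  assumes "l < n"
  shows "z_vec n lam mu l = (if l = count_mu (\<lambda>y. mu l < y) then r_coef n lam mu (mu l) else 0)"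
proof (cases "\<exists>i<mcount mu n. l = block_start n mu i")
  case True
  then obtain i where i: "i < mcount mu n" "l = block_start n mu i" by auto
  define v where "v = dvals mu n ! i"
  have l: "l = count_mu (\<lambda>y. v < y)" using block_start_eq[OF i(1)] i(2) unfolding v_def by simp
  have "v \<in> vals mu n" using dvals_in_vals[OF i(1)] unfolding v_def .
  then have "mu l = v"
    using mu_eq_iff_block_range[of l v] count_mu_less_lt_count_mu_le l count_mu_le[of "\<lambda>y. v \<le> y"] by auto
  then show ?thesis unfolding z_vec_def using True l by simp
next
  case False
  have "l \<noteq> count_mu (\<lambda>y. mu l < y)"
  proof
    assume l: "l = count_mu (\<lambda>y. mu l < y)"
    have "mu l \<in> set (dvals mu n)" using set_dvals assms unfolding vals_def by auto
    then obtain i where "i < mcount mu n" "dvals mu n ! i = mu l"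
      unfolding mcount_def by (metis in_set_conv_nth)
    then show False using False block_start_eq l by auto
  qed
  then show ?thesis unfolding z_vec_def using False by auto
qed

lemma r_coef_eq_0: "t \<notin> M_vals \<Longrightarrow> r_coef n lam mu t = 0"
  using M_vals_eq unfolding r_coef_def by auto

lemma r_coef_square: "t \<in> vals mu n \<Longrightarrow> (r_coef n lam mu t)\<^sup>2 = (if t \<in> M_vals then r_square t else 0)"
proof (cases "t \<in> M_vals")
  case True
  assume "t \<in> vals mu n"
  moreover have "{t' \<in> vals mu n. is_M n lam mu t' \<and> t' \<noteq> t} = M_vals - {t}"
    using M_vals_eq by auto
  ultimately have "r_coef n lam mu t = sqrt (r_square t)"
    using True M_vals_eq W_vals_eq unfolding r_coef_def r_square_def by auto
  then show ?thesis using True r_square_pos[OF True] by simp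
qed (simp add: r_coef_eq_0)

lemma r_coef_nonzero: "t \<in> M_vals \<Longrightarrow> r_coef n lam mu t \<noteq> 0"
  using r_coef_square[of t] r_square_pos[of t] M_vals_eq by force

lemma sum_z_vec_square_div:
  assumes "v \<notin> M_vals"
  shows "(\<Sum>l<n. (z_vec n lam mu l)\<^sup>2 / (v - mu l)) = (\<Sum>t\<in>M_vals. r_square t / (v - t))"
proof -
  have "(\<Sum>l<n. (z_vec n lam mu l)\<^sup>2 / (v - mu l))
      = (\<Sum>y\<in>vals mu n. \<Sum>l\<in>{l\<in>{..<n}. mu l = y}. (z_vec n lam mu l)\<^sup>2 / (v - mu l))"
    by (rule sum.group[symmetric]) (auto simp: vals_def)
  also have "\<dots> = (\<Sum>y\<in>vals mu n. (r_coef n lam mu y)\<^sup>2 / (v - y))"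
  proof (rule sum.cong[OF refl])
    fix y assume y: "y \<in> vals mu n"
    have "(\<Sum>l\<in>{l\<in>{..<n}. mu l = y}. (z_vec n lam mu l)\<^sup>2 / (v - mu l))
        = (\<Sum>l\<in>{l\<in>{..<n}. mu l = y}. if l = count_mu (\<lambda>x. y < x) then (r_coef n lam mu y)\<^sup>2 / (v - y) else 0)"
      by (rule sum.cong[OF refl]) (auto simp: z_vec_eq)
    moreover have "count_mu (\<lambda>x. y < x) \<in> {l\<in>{..<n}. mu l = y}"
      using mu_eq_iff_block_range[of "count_mu (\<lambda>x. y < x)" y] count_mu_less_lt_count_mu_le[OF y] by auto
    ultimately show "(\<Sum>l\<in>{l\<in>{..<n}. mu l = y}. (z_vec n lam mu l)\<^sup>2 / (v - mu l)) = (r_coef n lam mu y)\<^sup>2 / (v - y)"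
      by (simp add: sum.delta)
  qed
  also have "\<dots> = (\<Sum>y\<in>vals mu n. if y \<in> M_vals then r_square y / (v - y) else 0)"
    by (rule sum.cong[OF refl]) (simp add: r_coef_square)
  also have "\<dots> = (\<Sum>t\<in>M_vals. r_square t / (v - t))"
  proof -
    have "{y \<in> vals mu n. y \<in> M_vals} = M_vals" using M_vals_eq by auto
    then show ?thesis using finite_vals by (simp add: sum.inter_filter[symmetric])
  qed
  finally show ?thesis .
qed

end

section \<open>The tangent spaces at p_tilde\<close>

context interlacing
begin

abbreviation pt :: "complex mat" where
  "pt \<equiv> p_tilde n lam mu"

abbreviation zc :: "nat \<Rightarrow> complex" where
  "zc l \<equiv> complex_of_real (z_vec n lam mu l)"

lemma pt_carrier: "pt \<in> carrier_mat (Suc n) (Suc n)"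
  by (simp add: p_tilde_def)

lemma pt_entries:
  "pt $$ (0,0) = complex_of_real (c_const n lam mu)"
  "k < n \<Longrightarrow> pt $$ (Suc k, 0) = zc k"
  "k < n \<Longrightarrow> pt $$ (0, Suc k) = zc k"
  "k < n \<Longrightarrow> l < n \<Longrightarrow> pt $$ (Suc k, Suc l) = (if k = l then complex_of_real (mu k) else 0)"
  by (simp_all add: p_tilde_def)

lemma comm_pt_carrier: "X \<in> carrier_mat (Suc n) (Suc n) \<Longrightarrow> comm X pt \<in> carrier_mat (Suc n) (Suc n)"
  unfolding comm_def using pt_carrier by auto

lemma comm_pt_col_entry:
  assumes X: "X \<in> carrier_mat (Suc n) (Suc n)" and k: "k < n"
  shows "comm X pt $$ (Suc k, 0) = (complex_of_real (c_const n lam mu) - of_real (mu k)) * X$$(Suc k,0)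
           + (\<Sum>l<n. X$$(Suc k,Suc l) * zc l) - zc k * X$$(0,0)"
proof -
  have "(X * pt) $$ (Suc k, 0) = X$$(Suc k,0) * complex_of_real (c_const n lam mu) + (\<Sum>l<n. X$$(Suc k,Suc l) * zc l)"
    using mat_mult_entry_split_first[OF X pt_carrier, of "Suc k" 0] k by (simp add: pt_entries)
  moreover have "(pt * X) $$ (Suc k, 0) = zc k * X$$(0,0) + of_real (mu k) * X$$(Suc k, 0)"
    using mat_mult_entry_split_first[OF pt_carrier X, of "Suc k" 0] k
    by (simp add: pt_entries if_distrib[of "\<lambda>x. x * _"] cong: if_cong)
  moreover have "comm X pt $$ (Suc k, 0) = (X * pt) $$ (Suc k, 0) - (pt * X) $$ (Suc k, 0)"
    unfolding comm_def using X pt_carrier k by simp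
  ultimately show ?thesis by (simp add: algebra_simps)
qed

lemma comm_pt_block_entry:
  assumes X: "X \<in> carrier_mat (Suc n) (Suc n)" and k: "k < n" and l: "l < n"
  shows "comm X pt $$ (Suc k, Suc l)
           = X$$(Suc k,0) * zc l + X$$(Suc k,Suc l) * (of_real (mu l) - of_real (mu k)) - zc k * X$$(0,Suc l)"
proof -
  have "(X * pt) $$ (Suc k, Suc l) = X$$(Suc k,0) * zc l + X$$(Suc k,Suc l) * of_real (mu l)"
    using mat_mult_entry_split_first[OF X pt_carrier, of "Suc k" "Suc l"] k l
    by (simp add: pt_entries if_distrib[of "\<lambda>x. _ * x"] cong: if_cong)
  moreover have "(pt * X) $$ (Suc k, Suc l) = zc k * X$$(0,Suc l) + of_real (mu k) * X$$(Suc k,Suc l)"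
    using mat_mult_entry_split_first[OF pt_carrier X, of "Suc k" "Suc l"] k l
    by (simp add: pt_entries if_distrib[of "\<lambda>x. x * _"] cong: if_cong)
  moreover have "comm X pt $$ (Suc k, Suc l) = (X * pt) $$ (Suc k, Suc l) - (pt * X) $$ (Suc k, Suc l)"
    unfolding comm_def using X pt_carrier k l by simp
  ultimately show ?thesis by (simp add: algebra_simps)
qed

definition lower_block_vanishes :: "complex mat \<Rightarrow> bool" where
  "lower_block_vanishes X \<longleftrightarrow> (\<forall>k<n. \<forall>l<n. comm X pt $$ (Suc k, Suc l) = 0)"

lemma lower_block_vanishes_if_perp:
  assumes X: "X \<in> u_alg (Suc n)" and perp: "\<forall>Y\<in>k_alg n. omega pt X Y = 0"
  shows "lower_block_vanishes X"
  unfolding lower_block_vanishes_def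
proof (intro allI impI)
  fix k l assume k: "k < n" and l: "l < n"
  have Xc: "X \<in> carrier_mat (Suc n) (Suc n)" using X unfolding u_alg_def by simp
  have C: "comm X pt \<in> carrier_mat (Suc n) (Suc n)" using comm_pt_carrier[OF Xc] .
  have trace_0: "mtrace (comm X pt * Y) = 0" if "Y \<in> k_alg n" for Y
    using perp that omega_eq_mtrace_comm[OF pt_carrier Xc, of Y] unfolding k_alg_def u_alg_def by auto
  have in_k_alg: "two_entry_mat (Suc n) (Suc k) (Suc l) \<alpha> \<beta> \<in> k_alg n" if "cnj \<beta> = - \<alpha>" for \<alpha> \<beta>
    unfolding k_alg_def u_alg_def using two_entry_mat_carrier adj_two_entry_mat[OF that]
    by (auto simp: two_entry_mat_def)
  have "comm X pt $$ (Suc l, Suc k) - comm X pt $$ (Suc k, Suc l) = 0"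
    using trace_0[OF in_k_alg[of "-1" 1]] mtrace_mult_two_entry_mat[OF C, of "Suc k" "Suc l" 1 "-1"] k l by simp
  moreover have "\<i> * (comm X pt $$ (Suc l, Suc k) + comm X pt $$ (Suc k, Suc l)) = 0"
    using trace_0[OF in_k_alg[of \<i> \<i>]] mtrace_mult_two_entry_mat[OF C, of "Suc k" "Suc l" \<i> \<i>] k l
    by (simp add: algebra_simps)
  ultimately show "comm X pt $$ (Suc k, Suc l) = 0" by simp
qed

lemma perp_if_lower_block_vanishes:
  assumes X: "X \<in> carrier_mat (Suc n) (Suc n)" and "lower_block_vanishes X" and Y: "Y \<in> k_alg n"
  shows "omega pt X Y = 0"
proof -
  have Yc: "Y \<in> carrier_mat (Suc n) (Suc n)" using Y unfolding k_alg_def u_alg_def by simp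
  have "comm X pt $$ (i,j) * Y $$ (j,i) = 0" if "i < Suc n" "j < Suc n" for i j
  proof (cases "i = 0 \<or> j = 0")
    case True
    then show ?thesis using Y that unfolding k_alg_def by auto
  next
    case False
    then obtain k l where "i = Suc k" "j = Suc l" by (metis not0_implies_Suc)
    then show ?thesis using assms(2) that unfolding lower_block_vanishes_def by simp
  qed
  then have "mtrace (comm X pt * Y) = 0"
    unfolding mtrace_mult[OF comm_pt_carrier[OF X] Yc] by (intro sum.neutral ballI) auto
  then show ?thesis unfolding omega_eq_mtrace_comm[OF pt_carrier X Yc] by simp
qed

lemma tangent_K_perp_eq:
  "tangent_K_perp n pt = {comm X pt | X. X \<in> u_alg (Suc n) \<and> lower_block_vanishes X}"
proof (intro equalityI subsetI)
  fix A assume "A \<in> tangent_K_perp n pt"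
  then obtain X where "X \<in> u_alg (Suc n)" "\<forall>Y\<in>k_alg n. omega pt X Y = 0" "A = comm X pt"
    unfolding tangent_K_perp_def by auto
  then show "A \<in> {comm X pt | X. X \<in> u_alg (Suc n) \<and> lower_block_vanishes X}"
    using lower_block_vanishes_if_perp by blast
next
  fix A assume "A \<in> {comm X pt | X. X \<in> u_alg (Suc n) \<and> lower_block_vanishes X}"
  then obtain X where X: "X \<in> u_alg (Suc n)" "lower_block_vanishes X" "A = comm X pt" by blast
  then have "\<forall>Y\<in>k_alg n. omega pt X Y = 0"
    using perp_if_lower_block_vanishes[of X] unfolding u_alg_def by blast
  then show "A \<in> tangent_K_perp n pt" unfolding tangent_K_perp_def using X by auto
qed

end

section \<open>A single block\<close>

locale interlacing_block = interlacing +
  fixes i :: nat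
  assumes block_index: "i < mcount mu n"
begin

abbreviation blk_val :: real where
  "blk_val \<equiv> dvals mu n ! i"

abbreviation blk_start :: nat where
  "blk_start \<equiv> block_start n mu i"

abbreviation blk_size :: nat where
  "blk_size \<equiv> block_size n mu i"

lemma blk_start_eq: "blk_start = count_mu (\<lambda>y. blk_val < y)"
  using block_start_eq[OF block_index] .

lemma blk_end_eq: "blk_start + blk_size = count_mu (\<lambda>y. blk_val \<le> y)"
  using mult_mu_split[of blk_val] blk_start_eq unfolding block_size_def by simp

lemma blk_size_pos: "blk_size \<ge> 1"
  using mult_mu_pos[OF dvals_in_vals[OF block_index]] unfolding block_size_def .

lemma blk_end_le: "blk_start + blk_size \<le> n"
  using blk_end_eq count_mu_le by simp

lemma blk_start_less: "blk_start < n"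
  using blk_end_le blk_size_pos by simp

lemma mu_eq_blk_val_iff: "j < n \<Longrightarrow> mu j = blk_val \<longleftrightarrow> blk_start \<le> j \<and> j < blk_start + blk_size"
  using mu_eq_iff_block_range[of j blk_val] blk_start_eq blk_end_eq by auto

lemma mu_blk_start: "mu blk_start = blk_val"
  using mu_eq_blk_val_iff[OF blk_start_less] blk_size_pos by simp

lemma z_vec_blk_start: "z_vec n lam mu blk_start = r_coef n lam mu blk_val"
  using z_vec_eq[OF blk_start_less] mu_blk_start blk_start_eq by simp

lemma z_vec_in_block: "j < n \<Longrightarrow> mu j = blk_val \<Longrightarrow> j \<noteq> blk_start \<Longrightarrow> z_vec n lam mu j = 0"
  using z_vec_eq[of j] blk_start_eq by simp

lemma z_vec_in_block_nonM:
  "blk_val \<notin> M_vals \<Longrightarrow> j < n \<Longrightarrow> mu j = blk_val \<Longrightarrow> z_vec n lam mu j = 0"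
  using z_vec_in_block z_vec_blk_start r_coef_eq_0 by (cases "j = blk_start") auto

lemma L_group_carrier: "L_group n lam mu i \<subseteq> carrier_mat blk_size blk_size"
  unfolding L_group_def Let_def unitary_grp_def by auto

definition block_col :: "complex mat \<Rightarrow> complex vec" where
  "block_col X = vec blk_size (\<lambda>k. comm X pt $$ (Suc (blk_start + k), 0))"

lemma block_col_carrier: "block_col X \<in> carrier_vec blk_size"
  unfolding block_col_def by simp

lemma V_block_eq: "V_block n lam mu i = {block_col X | X. X \<in> u_alg (Suc n) \<and> lower_block_vanishes X}"
proof -
  have "block_proj n mu i (Tmap n (comm X pt)) = block_col X" for X
    unfolding block_proj_def Tmap_def block_col_def by (rule eq_vecI) (use blk_end_le in auto)
  then show ?thesis
    unfolding V_block_def V_space_def tangent_K_perp_eq by (auto simp: setcompr_eq_image image_image)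
qed

lemma U_block_eq: "U_block n lam mu i = {block_col Y | Y. Y \<in> k_alg n \<and> lower_block_vanishes Y}"
proof -
  have "tangent_K n pt \<inter> tangent_K_perp n pt = {comm Y pt | Y. Y \<in> k_alg n \<and> lower_block_vanishes Y}"
  proof (intro equalityI subsetI)
    fix A assume "A \<in> tangent_K n pt \<inter> tangent_K_perp n pt"
    then obtain X Y where "Y \<in> k_alg n" "A = comm Y pt" "lower_block_vanishes X" "A = comm X pt"
      unfolding tangent_K_def tangent_K_perp_eq by blast
    then show "A \<in> {comm Y pt | Y. Y \<in> k_alg n \<and> lower_block_vanishes Y}"
      unfolding lower_block_vanishes_def by auto
  qed (auto simp: tangent_K_def tangent_K_perp_eq k_alg_def)
  moreover have "block_proj n mu i (Tmap n (comm X pt)) = block_col X" for X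
    unfolding block_proj_def Tmap_def block_col_def by (rule eq_vecI) (use blk_end_le in auto)
  ultimately show ?thesis
    unfolding U_block_def U_space_def by (auto simp: setcompr_eq_image image_image)
qed

lemma U_block_subset_V_block: "U_block n lam mu i \<subseteq> V_block n lam mu i"
  unfolding U_block_def V_block_def U_space_def V_space_def by auto

lemma comm_pt_col_entry_nonM:
  assumes nM: "blk_val \<notin> M_vals" and X: "X \<in> carrier_mat (Suc n) (Suc n)"
    and lbv: "lower_block_vanishes X" and k: "k < blk_size"
  shows "comm X pt $$ (Suc (blk_start + k), 0) = complex_of_real (secular blk_val) * X $$ (Suc (blk_start + k), 0)"
proof -
  define j where "j = blk_start + k"
  have j: "j < n" using k blk_end_le unfolding j_def by simp
  have mj: "mu j = blk_val" using mu_eq_blk_val_iff[OF j] k unfolding j_def by simp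
  have zj: "z_vec n lam mu j = 0" using z_vec_in_block_nonM[OF nM j mj] .
  have entry: "X$$(Suc j,Suc l) * zc l = complex_of_real ((z_vec n lam mu l)\<^sup>2 / (blk_val - mu l)) * X$$(Suc j,0)"
    if l: "l < n" for l
  proof (cases "mu l = blk_val")
    case True
    then show ?thesis using z_vec_in_block_nonM[OF nM l] by simp
  next
    case False
    have "X$$(Suc j,0) * zc l + X$$(Suc j,Suc l) * (of_real (mu l) - of_real blk_val) = 0"
      using lbv comm_pt_block_entry[OF X j l] zj mj j l unfolding lower_block_vanishes_def by simp
    moreover have "complex_of_real blk_val - complex_of_real (mu l) \<noteq> 0" using False by simp
    ultimately have "X$$(Suc j,Suc l) = X$$(Suc j,0) * zc l / (of_real blk_val - of_real (mu l))"
      by (simp add: field_simps)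
    then show ?thesis using \<open>complex_of_real blk_val - complex_of_real (mu l) \<noteq> 0\<close>
      by (simp add: field_simps power2_eq_square)
  qed
  have "comm X pt $$ (Suc j, 0)
      = (complex_of_real (c_const n lam mu) - of_real blk_val) * X$$(Suc j,0) + (\<Sum>l<n. X$$(Suc j,Suc l) * zc l)"
    using comm_pt_col_entry[OF X j] zj mj by simp
  also have "(\<Sum>l<n. X$$(Suc j,Suc l) * zc l)
      = (\<Sum>l<n. complex_of_real ((z_vec n lam mu l)\<^sup>2 / (blk_val - mu l)) * X$$(Suc j,0))"
    by (rule sum.cong[OF refl]) (simp add: entry)
  also have "\<dots> = complex_of_real (\<Sum>l<n. (z_vec n lam mu l)\<^sup>2 / (blk_val - mu l)) * X$$(Suc j,0)"
    by (simp add: sum_distrib_right)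
  finally show ?thesis
    unfolding j_def[symmetric] secular_def sum_z_vec_square_div[OF nM, symmetric] by (simp add: algebra_simps)
qed

lemma block_col_nonM:
  assumes "blk_val \<notin> M_vals" "X \<in> carrier_mat (Suc n) (Suc n)" "lower_block_vanishes X"
  shows "block_col X = vec blk_size (\<lambda>k. complex_of_real (secular blk_val) * X $$ (Suc (blk_start + k), 0))"
  unfolding block_col_def using comm_pt_col_entry_nonM[OF assms] by (intro eq_vecI) auto

lemma Re_comm_pt_col_entry_M:
  assumes M: "blk_val \<in> M_vals" and X: "X \<in> u_alg (Suc n)" and lbv: "lower_block_vanishes X"
  shows "Re (comm X pt $$ (Suc blk_start, 0)) = 0"
proof -
  have Xc: "X \<in> carrier_mat (Suc n) (Suc n)" using X unfolding u_alg_def by simp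
  have s: "blk_start < n" by (rule blk_start_less)
  have zs: "z_vec n lam mu blk_start \<noteq> 0" using z_vec_blk_start r_coef_nonzero[OF M] by simp
  have B: "comm X pt $$ (Suc k, Suc l) = 0" if "k < n" "l < n" for k l
    using lbv that unfolding lower_block_vanishes_def by simp
  have skew: "cnj (X $$ (b,a)) = - X $$ (a,b)" if "a < Suc n" "b < Suc n" for a b
    using u_alg_cnj_entry[OF X that] .
  have Re_diag: "Re (X $$ (a,a)) = 0" if "a < Suc n" for a
    using skew[OF that that] cnj_eq_minus_iff by blast
  have Re_col: "Re (X $$ (Suc l, 0)) = 0" and Re_row: "Re (X $$ (0, Suc l)) = 0"
    if l: "l < n" and zl: "z_vec n lam mu l \<noteq> 0" for l
  proof -
    have row: "X$$(0,Suc l) = - cnj (X$$(Suc l,0))" using skew[of 0 "Suc l"] l by simp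
    have "X$$(Suc l,0) * zc l - zc l * X$$(0,Suc l) = 0" using B[OF l l] comm_pt_block_entry[OF Xc l l] by simp
    then have "zc l * (X$$(Suc l,0) + cnj (X$$(Suc l,0))) = 0" unfolding row by (simp add: algebra_simps)
    then have "X$$(Suc l,0) + cnj (X$$(Suc l,0)) = 0" using zl by simp
    then have "Re (X$$(Suc l,0) + cnj (X$$(Suc l,0))) = 0" by simp
    then show "Re (X $$ (Suc l, 0)) = 0" by simp
    then show "Re (X $$ (0, Suc l)) = 0" using row by simp
  qed
  have Re_term: "Re (X$$(Suc blk_start,Suc l) * zc l) = 0" if l: "l < n" for l
  proof (cases "z_vec n lam mu l = 0 \<or> l = blk_start")
    case True
    then show ?thesis using Re_diag[of "Suc blk_start"] s by auto
  next
    case False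
    then have ne: "mu l \<noteq> mu blk_start" using z_vec_in_block[OF l] mu_blk_start by auto
    have "X$$(Suc blk_start,0) * zc l + X$$(Suc blk_start,Suc l) * (of_real (mu l) - of_real (mu blk_start))
        - zc blk_start * X$$(0,Suc l) = 0"
      using B[OF s l] comm_pt_block_entry[OF Xc s l] by simp
    then have "Re (X$$(Suc blk_start,0) * zc l + X$$(Suc blk_start,Suc l) * (of_real (mu l) - of_real (mu blk_start))
        - zc blk_start * X$$(0,Suc l)) = 0"
      by simp
    then have "Re (X$$(Suc blk_start,0)) * z_vec n lam mu l + Re (X$$(Suc blk_start,Suc l)) * (mu l - mu blk_start)
        - z_vec n lam mu blk_start * Re (X$$(0,Suc l)) = 0"
      by simp
    then have "Re (X$$(Suc blk_start,Suc l)) * (mu l - mu blk_start) = 0"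
      using Re_col[OF s zs] Re_row[of l] False l by simp
    then show ?thesis using ne by simp
  qed
  have "Re (comm X pt $$ (Suc blk_start, 0))
      = (c_const n lam mu - mu blk_start) * Re (X$$(Suc blk_start,0))
        + (\<Sum>l<n. Re (X$$(Suc blk_start,Suc l) * zc l)) - z_vec n lam mu blk_start * Re (X$$(0,0))"
    using comm_pt_col_entry[OF Xc s] by (simp add: Re_sum)
  also have "(\<Sum>l<n. Re (X$$(Suc blk_start,Suc l) * zc l)) = 0" by (intro sum.neutral ballI Re_term) simp
  finally show ?thesis using Re_col[OF s zs] Re_diag[of 0] by simp
qed

end

context interlacing_block
begin

lemma exists_u_alg_block_col:
  assumes nM: "blk_val \<notin> M_vals" and sec: "secular blk_val \<noteq> 0" and u: "u \<in> carrier_vec blk_size"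
  shows "\<exists>X. X \<in> u_alg (Suc n) \<and> lower_block_vanishes X \<and> block_col X = u"
proof -
  define F where "F = secular blk_val"
  define inb where "inb j \<longleftrightarrow> blk_start \<le> j \<and> j < blk_start + blk_size" for j
  define w where "w j = (if inb j then u $ (j - blk_start) / complex_of_real F else 0)" for j
  \<comment> \<open>first column u / F on the block; Z solves the lower-block equations of [X,pt]\<close>
  define Z where "Z k l = (if inb k \<and> \<not> inb l then w k * zc l / complex_of_real (blk_val - mu l)
      else if \<not> inb k \<and> inb l then - (zc k * cnj (w l)) / complex_of_real (blk_val - mu k) else 0)" for k l
  define X where "X = mat (Suc n) (Suc n) (\<lambda>(a,b). if a = 0 then (if b = 0 then 0 else - cnj (w (b - 1)))
      else if b = 0 then w (a - 1) else Z (a - 1) (b - 1))"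
  have Xc: "X \<in> carrier_mat (Suc n) (Suc n)" unfolding X_def by simp
  have X_entries: "X $$ (0,0) = 0" "\<And>l. l < n \<Longrightarrow> X $$ (0, Suc l) = - cnj (w l)"
    "\<And>k. k < n \<Longrightarrow> X $$ (Suc k, 0) = w k" "\<And>k l. k < n \<Longrightarrow> l < n \<Longrightarrow> X $$ (Suc k, Suc l) = Z k l"
    unfolding X_def by simp_all
  have inb_iff: "inb j \<longleftrightarrow> mu j = blk_val" if "j < n" for j
    using mu_eq_blk_val_iff[OF that] unfolding inb_def by simp
  have z_inb: "zc j = 0" if "j < n" "inb j" for j using z_vec_in_block_nonM[OF nM] that inb_iff by simp
  have w_out: "w j = 0" if "\<not> inb j" for j using that unfolding w_def by simp
  have Z_skew: "cnj (Z l k) = - Z k l" for k l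
    by (cases "inb k"; cases "inb l") (simp_all add: Z_def algebra_simps)
  have "adj X = - X"
  proof (rule eq_matI)
    fix a b assume "a < dim_row (- X)" "b < dim_col (- X)"
    then have ab: "a < Suc n" "b < Suc n" using Xc by auto
    have "cnj (X $$ (b,a)) = - X $$ (a,b)"
      using ab X_entries Z_skew by (cases a; cases b) auto
    then show "adj X $$ (a,b) = (- X) $$ (a,b)" using ab Xc by (simp add: adj_def)
  qed (use Xc in \<open>auto simp: adj_def\<close>)
  then have Xu: "X \<in> u_alg (Suc n)" unfolding u_alg_def using Xc by simp
  have "comm X pt $$ (Suc k, Suc l) = 0" if k: "k < n" and l: "l < n" for k l
  proof -
    have e: "comm X pt $$ (Suc k, Suc l) = w k * zc l + Z k l * (of_real (mu l) - of_real (mu k)) + zc k * cnj (w l)"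
      using comm_pt_block_entry[OF Xc k l] X_entries k l by simp
    consider "inb k" "inb l" | "inb k" "\<not> inb l" | "\<not> inb k" "inb l" | "\<not> inb k" "\<not> inb l" by blast
    then show ?thesis
    proof cases
      case 1
      then show ?thesis using e z_inb k l unfolding Z_def by simp
    next
      case 2
      then have "complex_of_real blk_val - complex_of_real (mu l) \<noteq> 0" "mu k = blk_val"
        using inb_iff k l by auto
      then show ?thesis using e w_out 2 unfolding Z_def by (simp add: field_simps)
    next
      case 3
      then have "complex_of_real blk_val - complex_of_real (mu k) \<noteq> 0" "mu l = blk_val"
        using inb_iff k l by auto
      then show ?thesis using e w_out 3 unfolding Z_def by (simp add: field_simps)
    next
      case 4
      then show ?thesis using e w_out unfolding Z_def by simp
    qed
  qed
  then have lbv: "lower_block_vanishes X" unfolding lower_block_vanishes_def by blast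
  have "block_col X $ k = u $ k" if k: "k < blk_size" for k
  proof -
    have "blk_start + k < n" "inb (blk_start + k)" using k blk_end_le unfolding inb_def by auto
    then show ?thesis
      using comm_pt_col_entry_nonM[OF nM Xc lbv k] X_entries sec k
      unfolding block_col_def w_def F_def by simp
  qed
  then have "block_col X = u" using u block_col_carrier by (intro eq_vecI) auto
  then show ?thesis using Xu lbv by blast
qed

lemma exists_k_alg_block_col:
  fixes u :: "complex vec"
  assumes M: "blk_val \<in> M_vals" and u: "u \<in> carrier_vec blk_size" and re: "Re (u $ 0) = 0"
  shows "\<exists>Y. Y \<in> k_alg n \<and> lower_block_vanishes Y \<and> block_col Y = u"
proof -
  define r where "r = r_coef n lam mu blk_val"
  define inb where "inb j \<longleftrightarrow> blk_start \<le> j \<and> j < blk_start + blk_size" for j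
  \<comment> \<open>only column and row blk_start are filled, as z vanishes on the rest of the block\<close>
  define Z where "Z k l = (if l = blk_start \<and> inb k then u $ (k - blk_start) / complex_of_real r
      else if k = blk_start \<and> inb l \<and> l \<noteq> blk_start then - cnj (u $ (l - blk_start)) / complex_of_real r else 0)" for k l
  define Y where "Y = mat (Suc n) (Suc n) (\<lambda>(a,b). if a = 0 \<or> b = 0 then 0 else Z (a - 1) (b - 1))"
  have r: "r \<noteq> 0" "z_vec n lam mu blk_start = r" using r_coef_nonzero[OF M] z_vec_blk_start unfolding r_def by auto
  have s: "blk_start < n" "inb blk_start" using blk_start_less blk_size_pos unfolding inb_def by auto
  have Yc: "Y \<in> carrier_mat (Suc n) (Suc n)" unfolding Y_def by simp
  have Y0: "Y $$ (0, j) = 0" "Y $$ (j, 0) = 0" if "j < Suc n" for j using that unfolding Y_def by simp_all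
  have YZ: "Y $$ (Suc k, Suc l) = Z k l" if "k < n" "l < n" for k l using that unfolding Y_def by simp
  have inb_iff: "inb j \<longleftrightarrow> mu j = blk_val" if "j < n" for j
    using mu_eq_blk_val_iff[OF that] unfolding inb_def by simp
  have "cnj (u $ 0) = - u $ 0" using re cnj_eq_minus_iff by blast
  then have Z_skew: "cnj (Z l k) = - Z k l" for k l
    using s by (cases "k = blk_start"; cases "l = blk_start") (auto simp: Z_def)
  have "adj Y = - Y"
  proof (rule eq_matI)
    fix a b assume "a < dim_row (- Y)" "b < dim_col (- Y)"
    then have ab: "a < Suc n" "b < Suc n" using Yc by auto
    have "cnj (Y $$ (b,a)) = - Y $$ (a,b)"
      using ab Y0 YZ Z_skew by (cases a; cases b) auto
    then show "adj Y $$ (a,b) = (- Y) $$ (a,b)" using ab Yc by (simp add: adj_def)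
  qed (use Yc in \<open>auto simp: adj_def\<close>)
  then have Yk: "Y \<in> k_alg n" unfolding k_alg_def u_alg_def using Yc Y0 by auto
  have Z_support: "inb k \<and> inb l" if "Z k l \<noteq> 0" for k l
    using that s unfolding Z_def by (auto split: if_splits)
  have "comm Y pt $$ (Suc k, Suc l) = 0" if k: "k < n" and l: "l < n" for k l
  proof -
    have "comm Y pt $$ (Suc k, Suc l) = Z k l * (of_real (mu l) - of_real (mu k))"
      using comm_pt_block_entry[OF Yc k l] Y0[of "Suc k"] Y0[of "Suc l"] YZ[OF k l] k l by simp
    then show ?thesis using Z_support[of k l] inb_iff k l by (cases "Z k l = 0") auto
  qed
  then have lbv: "lower_block_vanishes Y" unfolding lower_block_vanishes_def by blast
  have "comm Y pt $$ (Suc (blk_start + k), 0) = u $ k" if k: "k < blk_size" for k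
  proof -
    define j where "j = blk_start + k"
    have j: "j < n" "inb j" using k blk_end_le unfolding j_def inb_def by auto
    have "Y$$(Suc j,Suc l) * zc l = (if l = blk_start then Z j blk_start * zc blk_start else 0)" if l: "l < n" for l
    proof (cases "l = blk_start \<or> \<not> inb l")
      case True
      then show ?thesis using YZ[OF j(1) l] Z_support[of j l] by auto
    next
      case False
      then show ?thesis using z_vec_in_block[OF l] inb_iff[OF l] by simp
    qed
    then have "comm Y pt $$ (Suc j, 0) = (\<Sum>l<n. if l = blk_start then Z j blk_start * zc blk_start else 0)"
      using comm_pt_col_entry[OF Yc j(1)] Y0[of 0] Y0[of "Suc j"] j by simp
    also have "\<dots> = u $ k" using s j r unfolding Z_def j_def by simp
    finally show ?thesis unfolding j_def .
  qed
  then have "block_col Y = u" using u unfolding block_col_def by (intro eq_vecI) auto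
  then show ?thesis using Yk lbv by blast
qed

lemma zero_in_U_block: "0\<^sub>v blk_size \<in> U_block n lam mu i"
proof -
  have "comm (0\<^sub>m (Suc n) (Suc n)) pt = 0\<^sub>m (Suc n) (Suc n)"
    unfolding comm_def using pt_carrier by simp
  moreover have "0\<^sub>m (Suc n) (Suc n) \<in> k_alg n"
    unfolding k_alg_def u_alg_def adj_def by (auto intro!: eq_matI)
  ultimately have "block_col (0\<^sub>m (Suc n) (Suc n)) \<in> U_block n lam mu i"
    unfolding U_block_eq lower_block_vanishes_def by auto
  moreover have "block_col (0\<^sub>m (Suc n) (Suc n)) = 0\<^sub>v blk_size"
    unfolding block_col_def comm_def using pt_carrier blk_end_le by (intro eq_vecI) auto
  ultimately show ?thesis by simp
qed

lemma V_block_U_block_M: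
  assumes M: "blk_val \<in> M_vals"
  shows "V_block n lam mu i = {u \<in> carrier_vec blk_size. Re (u $ 0) = 0}"
    and "U_block n lam mu i = {u \<in> carrier_vec blk_size. Re (u $ 0) = 0}"
proof -
  have "V_block n lam mu i \<subseteq> {u \<in> carrier_vec blk_size. Re (u $ 0) = 0}"
    using Re_comm_pt_col_entry_M[OF M] blk_size_pos block_col_carrier
    unfolding V_block_eq block_col_def by auto
  moreover have "{u \<in> carrier_vec blk_size. Re (u $ 0) = 0} \<subseteq> U_block n lam mu i"
    unfolding U_block_eq using exists_k_alg_block_col[OF M] by blast
  ultimately show "V_block n lam mu i = {u \<in> carrier_vec blk_size. Re (u $ 0) = 0}"
    and "U_block n lam mu i = {u \<in> carrier_vec blk_size. Re (u $ 0) = 0}"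
    using U_block_subset_V_block by blast+
qed

lemma U_block_nonM:
  assumes nM: "blk_val \<notin> M_vals"
  shows "U_block n lam mu i = {0\<^sub>v blk_size}"
proof -
  have "block_col Y = 0\<^sub>v blk_size" if Y: "Y \<in> k_alg n" "lower_block_vanishes Y" for Y
  proof -
    have Yc: "Y \<in> carrier_mat (Suc n) (Suc n)" using Y unfolding k_alg_def u_alg_def by simp
    have "Y $$ (Suc (blk_start + k), 0) = 0" if "k < blk_size" for k
      using Y(1) that blk_end_le unfolding k_alg_def by auto
    then show ?thesis unfolding block_col_nonM[OF nM Yc Y(2)] by (intro eq_vecI) auto
  qed
  then show ?thesis using zero_in_U_block unfolding U_block_eq by auto
qed

lemma V_block_P:
  assumes P: "is_P n lam mu blk_val"
  shows "V_block n lam mu i = carrier_vec blk_size"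
proof -
  have nM: "blk_val \<notin> M_vals" and "blk_val \<notin> W_vals"
    using P is_P_iff unfolding M_vals_def W_vals_def by auto
  then have "secular blk_val \<noteq> 0" using secular_eq_0_iff[OF nM] by simp
  then show ?thesis
    unfolding V_block_eq using exists_u_alg_block_col[OF nM] block_col_carrier by blast
qed

lemma V_block_W:
  assumes nM: "blk_val \<notin> M_vals" and nP: "\<not> is_P n lam mu blk_val"
  shows "V_block n lam mu i = {0\<^sub>v blk_size}"
proof -
  have "blk_val \<in> all_vals" using dvals_in_vals[OF block_index] unfolding all_vals_def vals_def by auto
  then have "mult_gap blk_val = 1" using nM nP mult_gap_cases is_P_iff unfolding M_vals_def by auto
  then have "secular blk_val = 0"
    using secular_eq_0_iff[OF nM] \<open>blk_val \<in> all_vals\<close> unfolding W_vals_def by simp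
  then have "block_col X = 0\<^sub>v blk_size" if "X \<in> u_alg (Suc n)" "lower_block_vanishes X" for X
    using that block_col_nonM[OF nM] unfolding u_alg_def by auto
  then show ?thesis
    using zero_in_U_block U_block_subset_V_block unfolding V_block_eq by auto
qed

lemma quot_rep_iso_block:
  "quot_rep_iso (V_block n lam mu i) (U_block n lam mu i) (L_group n lam mu i)
     (if is_P n lam mu blk_val then carrier_vec blk_size else {0\<^sub>v blk_size})"
proof -
  consider (M) "blk_val \<in> M_vals" | (P) "is_P n lam mu blk_val" | (W) "blk_val \<notin> M_vals" "\<not> is_P n lam mu blk_val"
    by blast
  then show ?thesis
  proof cases
    case M
    then have "\<not> is_P n lam mu blk_val" using is_P_iff unfolding M_vals_def by simp
    moreover have "quot_rep_iso (V_block n lam mu i) (U_block n lam mu i) (L_group n lam mu i) {0\<^sub>v blk_size}"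
      unfolding V_block_U_block_M[OF M] using L_group_carrier blk_size_pos
      by (intro quot_rep_iso_self) auto
    ultimately show ?thesis by simp
  next
    case P
    then have "blk_val \<notin> M_vals" using is_P_iff unfolding M_vals_def by simp
    then show ?thesis
      using P quot_rep_iso_carrier_vec[OF V_block_P[OF P] U_block_nonM L_group_carrier] by simp
  next
    case W
    then show ?thesis
      using quot_rep_iso_self[of "{0\<^sub>v blk_size}" blk_size "L_group n lam mu i"] L_group_carrier
        V_block_W[OF W] U_block_nonM[OF W(1)] by auto
  qed
qed

end

theorem proposition4p6:
  fixes n :: nat and lam mu :: "nat \<Rightarrow> real"
  assumes "n \<ge> 1"
    and "\<And>j. j < n \<Longrightarrow> lam j \<ge> mu j"
    and "\<And>j. j < n \<Longrightarrow> mu j \<ge> lam (j+1)"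
  shows "\<forall>i < mcount mu n.
           quot_rep_iso (V_block n lam mu i) (U_block n lam mu i) (L_group n lam mu i)
             (if is_P n lam mu (dvals mu n ! i) then carrier_vec (block_size n mu i)
              else {0\<^sub>v (block_size n mu i)})"
proof (intro allI impI)
  fix i assume "i < mcount mu n"
  then interpret interlacing_block n lam mu i
    by unfold_locales (use assms in auto)
  show "quot_rep_iso (V_block n lam mu i) (U_block n lam mu i) (L_group n lam mu i)
      (if is_P n lam mu blk_val then carrier_vec blk_size else {0\<^sub>v blk_size})"
    by (rule quot_rep_iso_block)
qed

end
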